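(* There exist constants $0<a_n\le A_n$ depending only on $n$ such that the following holds. Let $\alpha\in(0,1)$, $0<\epsilon<\min(\alpha,1-\alpha)$, $Q=[0,1]^n$, and let $\Lambda\subset\mathbb{R}^n$ be a convex set with $Q\subseteq\Lambda\subseteq n^{3/2}Q$. Let $E\subset\mathbb{R}^n$ be a measurable set of finite measure with $\frac{1}{|\Lambda|}\int_\Lambda\chi_E=\alpha$. Then there exists a cube $R\subseteq\Lambda$ with sides parallel to the axes and $a_n\epsilon^n\le|R|\le A_n\epsilon^n$ such that \[ \frac{\alpha-\epsilon}{1-\epsilon}\le\frac{1}{|R|}\int_R\chi_E\le\frac{\alpha}{1-\epsilon}. \]
   Context: $cQ$ denotes the dilate of $Q$ by factor $c$ about its center. *)

theory Defs
  imports "HOL-Analysis.Analysis"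
begin

definition dilate :: "real \<Rightarrow> 'a::real_vector \<Rightarrow> 'a set \<Rightarrow> 'a set" where
  "dilate c x0 S = (\<lambda>x. x0 + c *\<^sub>R (x - x0)) ` S"

definition unit_cube :: "'a::euclidean_space set" where
  "unit_cube = cbox 0 One"

definition unit_cube_center :: "'a::euclidean_space" where
  "unit_cube_center = (1/2) *\<^sub>R One"

definition axis_cube :: "'a::euclidean_space set \<Rightarrow> bool" where
  "axis_cube R \<longleftrightarrow> (\<exists>x s. s > 0 \<and> R = cbox x (x + s *\<^sub>R One))"

end

theory Submission
  imports Defs
begin

(* Fix cubes of side d = \<epsilon>/(2n) and let them slide with lower corner x in
   the shrunken copy T = (1 - d)\<Lambda>.  Each such cube lies in \<Lambda> (convexity plus Q \<subseteq> \<Lambda>),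
   and |T| = (1 - d)^n |\<Lambda>| > (1 - \<epsilon>)|\<Lambda>| by Bernoulli's inequality.  By Tonelli,
   integrating over x in T the mass of E (resp. of \<Lambda> - E) inside the cube is at most
   d^n |\<Lambda> \<inter> E| (resp. d^n |\<Lambda> - E|).  Hence not every cube can have density above
   \<alpha>/(1 - \<epsilon>), and not every cube can have density below (\<alpha> - \<epsilon>)/(1 - \<epsilon>).  The
   density is continuous in x and T is connected, so some cube has density in between. *)

definition cube :: "real \<Rightarrow> 'a::euclidean_space \<Rightarrow> 'a set" where
  "cube d x = cbox x (x + d *\<^sub>R One)"

lemma cube_lmeasurable [intro, simp]: "cube d x \<in> lmeasurable"
  by (simp add: cube_def)

lemma cube_borel [intro, simp]: "cube d x \<in> sets borel"
  by (simp add: cube_def)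

lemma measure_cube:
  assumes "d \<ge> 0"
  shows "measure lebesgue (cube d (x::'a::euclidean_space)) = d ^ DIM('a)"
  using assms by (simp add: cube_def measure_lborel_cbox_eq inner_simps)

lemma measure_inter_le_diff:
  assumes "A \<in> fmeasurable M" "B \<in> fmeasurable M" "E \<in> sets M"
  shows "measure M (A \<inter> E) - measure M (B \<inter> E) \<le> measure M A - measure M (A \<inter> B)"
proof -
  have "(B \<inter> E) \<union> (A - A \<inter> B) \<in> fmeasurable M"
    by (rule fmeasurableI2[of "A \<union> B"]) (use assms in \<open>auto intro: fmeasurable.Un\<close>)
  then have "measure M (A \<inter> E) \<le> measure M ((B \<inter> E) \<union> (A - A \<inter> B))"
    using assms by (intro measure_mono_fmeasurable) auto
  also have "\<dots> \<le> measure M (B \<inter> E) + measure M (A - A \<inter> B)"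
    using assms by (intro measure_Un_le) auto
  also have "measure M (A - A \<inter> B) = measure M A - measure M (A \<inter> B)"
    using assms by (intro measure_Diff) (auto simp: fmeasurable_def)
  finally show ?thesis by simp
qed

lemma measure_cube_inter_cube:
  fixes x y :: "'a::euclidean_space"
  assumes "d \<ge> 0"
  shows "measure lebesgue (cube d x \<inter> cube d y) = (\<Prod>i\<in>Basis. max 0 (d - \<bar>x\<bullet>i - y\<bullet>i\<bar>))"
proof -
  have eq: "cube d x \<inter> cube d y = cbox (\<Sum>i\<in>Basis. max (x\<bullet>i) (y\<bullet>i) *\<^sub>R i)
      (\<Sum>i\<in>Basis. min ((x + d *\<^sub>R One)\<bullet>i) ((y + d *\<^sub>R One)\<bullet>i) *\<^sub>R i)"
    unfolding cube_def by (rule Int_interval)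
  show ?thesis
  proof (cases "\<forall>i\<in>Basis. \<bar>x\<bullet>i - y\<bullet>i\<bar> \<le> d")
    case True
    then show ?thesis unfolding eq
      by (auto simp: measure_lborel_cbox_eq inner_simps intro!: prod.cong)
  next
    case False
    then obtain j where j: "j \<in> Basis" "\<bar>x\<bullet>j - y\<bullet>j\<bar> > d" by force
    then have "(\<Prod>i\<in>Basis. max 0 (d - \<bar>x\<bullet>i - y\<bullet>i\<bar>)) = 0"
      by (intro prod_zero) (auto intro!: bexI[of _ j])
    moreover have "cube d x \<inter> cube d y = {}"
    proof (intro equals0I)
      fix z assume "z \<in> cube d x \<inter> cube d y"
      then have "x\<bullet>j \<le> z\<bullet>j \<and> z\<bullet>j \<le> x\<bullet>j + d \<and> y\<bullet>j \<le> z\<bullet>j \<and> z\<bullet>j \<le> y\<bullet>j + d"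
        using j(1) by (auto simp: cube_def mem_box inner_simps)
      with j(2) show False by linarith
    qed
    ultimately show ?thesis by simp
  qed
qed

lemma continuous_measure_cube_inter:
  fixes E :: "'a::euclidean_space set"
  assumes "d \<ge> 0" "E \<in> sets lebesgue"
  shows "continuous_on UNIV (\<lambda>x. measure lebesgue (cube d x \<inter> E))"
  unfolding continuous_on_def
proof (intro ballI)
  fix x :: 'a
  define g where "g y = d ^ DIM('a) - (\<Prod>i\<in>Basis. max 0 (d - \<bar>x\<bullet>i - y\<bullet>i\<bar>))" for y
  have "(g \<longlongrightarrow> g x) (at x within UNIV)"
    unfolding g_def by (intro tendsto_intros)
  moreover have "g x = 0" using assms by (simp add: g_def prod_constant)
  ultimately have g: "(g \<longlongrightarrow> 0) (at x within UNIV)" by simp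
  have "\<bar>measure lebesgue (cube d y \<inter> E) - measure lebesgue (cube d x \<inter> E)\<bar> \<le> g y" for y
  proof -
    have "measure lebesgue (cube d y) - measure lebesgue (cube d y \<inter> cube d x) = g y"
      "measure lebesgue (cube d x) - measure lebesgue (cube d x \<inter> cube d y) = g y"
      using assms(1) by (simp_all only: g_def measure_cube measure_cube_inter_cube abs_minus_commute)
    then show ?thesis
      using measure_inter_le_diff[OF cube_lmeasurable cube_lmeasurable assms(2), of d y d x]
        measure_inter_le_diff[OF cube_lmeasurable cube_lmeasurable assms(2), of d x d y]
      by linarith
  qed
  then have "((\<lambda>y. measure lebesgue (cube d y \<inter> E) - measure lebesgue (cube d x \<inter> E)) \<longlongrightarrow> 0)
      (at x within UNIV)"
    by (intro Lim_null_comparison[OF _ g] always_eventually) simp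
  then show "((\<lambda>y. measure lebesgue (cube d y \<inter> E)) \<longlongrightarrow> measure lebesgue (cube d x \<inter> E))
      (at x within UNIV)"
    by (simp add: LIM_zero_iff)
qed

text \<open>Every Lebesgue set \<open>A\<close> contains a Borel set \<open>B\<close> that captures the same mass from
  every Lebesgue set; this lets us apply Tonelli's theorem, which is available for the
  Borel product measure.\<close>

lemma lebesgue_inner_borel:
  fixes A :: "'a::euclidean_space set"
  assumes "A \<in> sets lebesgue"
  obtains B where "B \<in> sets borel" "B \<subseteq> A"
    "\<And>X. X \<in> sets lebesgue \<Longrightarrow> measure lebesgue (X \<inter> B) = measure lebesgue (X \<inter> A)"
proof -
  obtain B N N' where *: "A = B \<union> N" "N \<subseteq> N'" "N' \<in> null_sets lborel" "B \<in> sets lborel"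
    using sets_completionE[OF assms] by metis
  have "measure lebesgue (X \<inter> A) = measure lebesgue (X \<inter> B)" if X: "X \<in> sets lebesgue" for X
  proof -
    have "X \<inter> A = (X \<inter> B) \<union> (X \<inter> (A - B))" using *(1) by auto
    moreover have "X \<inter> (A - B) \<in> null_sets lebesgue"
      using * X assms by (intro null_sets_completion_subset[OF _ null_sets_completionI[OF *(3)]]) auto
    moreover have "X \<inter> B \<in> sets lebesgue" using *(4) X by auto
    ultimately show ?thesis by (simp add: measure_Un_null_set)
  qed
  with * that show ?thesis by auto
qed

text \<open>Tonelli: integrating over all corners \<open>x\<close> the mass of \<open>cube d x \<inter> F\<close>
  counts every point of \<open>F\<close> exactly \<open>d\<^sup>n\<close> times.\<close>

lemma nn_integral_emeasure_cube_inter: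
  fixes F :: "'a::euclidean_space set"
  assumes "F \<in> sets borel" "d \<ge> 0"
  shows "(\<integral>\<^sup>+x. emeasure lborel (cube d x \<inter> F) \<partial>lborel) = ennreal (d ^ DIM('a)) * emeasure lborel F"
proof -
  define S where "S = {p::'a \<times> 'a. \<forall>i\<in>Basis. fst p \<bullet> i \<le> snd p \<bullet> i \<and> snd p \<bullet> i \<le> fst p \<bullet> i + d}"
  define G where "G = (UNIV \<times> F) \<inter> S"
  have "closed S"
    unfolding S_def Ball_def
    by (intro closed_Collect_all closed_Collect_imp closed_Collect_conj closed_Collect_le
        open_Collect_const continuous_intros)
  then have "S \<in> sets (lborel \<Otimes>\<^sub>M lborel)"
    by (subst lborel_prod) (simp add: borel_closed)
  moreover have "UNIV \<times> F \<in> sets (lborel \<Otimes>\<^sub>M lborel)"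
    using assms(1) by (intro pair_measureI) auto
  ultimately have "G \<in> sets (lborel \<Otimes>\<^sub>M lborel)"
    unfolding G_def by (intro sets.Int)
  then have meas: "(\<lambda>(x, y). indicator G (x, y) :: ennreal) \<in> borel_measurable (lborel \<Otimes>\<^sub>M lborel)"
    by simp
  have "(\<integral>\<^sup>+x. emeasure lborel (cube d x \<inter> F) \<partial>lborel)
      = (\<integral>\<^sup>+x. (\<integral>\<^sup>+y. indicator G (x, y) \<partial>lborel) \<partial>lborel)"
  proof (intro nn_integral_cong)
    fix x :: 'a
    have "indicator G (x, y) = (indicator (cube d x \<inter> F) y :: ennreal)" for y
      by (auto simp: G_def S_def cube_def mem_box inner_simps indicator_def)
    then show "emeasure lborel (cube d x \<inter> F) = (\<integral>\<^sup>+y. indicator G (x, y) \<partial>lborel)"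
      using assms(1) by (simp add: sets.Int)
  qed
  also have "\<dots> = (\<integral>\<^sup>+y. (\<integral>\<^sup>+x. indicator G (x, y) \<partial>lborel) \<partial>lborel)"
    using lborel_pair.Fubini'[OF meas] by simp
  also have "\<dots> = (\<integral>\<^sup>+y. ennreal (d ^ DIM('a)) * indicator F y \<partial>lborel)"
  proof (intro nn_integral_cong)
    fix y :: 'a
    have "(\<integral>\<^sup>+x. indicator G (x, y) \<partial>lborel) = (\<integral>\<^sup>+x. indicator F y * indicator (cbox (y - d *\<^sub>R One) y) x \<partial>lborel)"
      by (intro nn_integral_cong) (auto simp: G_def S_def mem_box inner_simps indicator_def algebra_simps)
    also have "\<dots> = indicator F y * emeasure lborel (cbox (y - d *\<^sub>R One) y)"
      by (subst nn_integral_cmult_indicator) auto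
    also have "emeasure lborel (cbox (y - d *\<^sub>R One) y) = ennreal (d ^ DIM('a))"
      using assms(2) by (simp add: emeasure_lborel_cbox_eq inner_simps prod_constant)
    finally show "(\<integral>\<^sup>+x. indicator G (x, y) \<partial>lborel) = ennreal (d ^ DIM('a)) * indicator F y"
      by (simp add: mult.commute)
  qed
  also have "\<dots> = ennreal (d ^ DIM('a)) * emeasure lborel F"
    using assms(1) by (intro nn_integral_cmult_indicator) auto
  finally show ?thesis .
qed

lemma cube_density_averaging:
  fixes T F :: "'a::euclidean_space set"
  assumes T: "T \<in> lmeasurable" and F: "F \<in> lmeasurable" and d: "d > 0"
    and dense: "\<And>x. x \<in> T \<Longrightarrow> c * d ^ DIM('a) \<le> measure lebesgue (cube d x \<inter> F)"
  shows "c * measure lebesgue T \<le> measure lebesgue F"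
proof (cases "c \<le> 0")
  case True
  then show ?thesis by (simp add: mult_nonpos_nonneg order_trans[OF _ measure_nonneg])
next
  case False
  define dn where "dn = d ^ DIM('a)"
  have dn: "dn > 0" using d by (simp add: dn_def)
  have borel_emeasure: "emeasure lborel B = ennreal (measure lebesgue B)"
    if "B \<in> sets borel" "B \<subseteq> X" "X \<in> lmeasurable" for B X
  proof -
    have "emeasure lborel B = emeasure lebesgue B" using that(1) by simp
    then show ?thesis using fmeasurableI2[OF that(3,2)] that(1) by (simp add: emeasure_eq_measure2)
  qed
  obtain T0 where T0: "T0 \<in> sets borel" "T0 \<subseteq> T"
    "\<And>X. X \<in> sets lebesgue \<Longrightarrow> measure lebesgue (X \<inter> T0) = measure lebesgue (X \<inter> T)"
    using lebesgue_inner_borel[of T] T by blast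
  obtain F0 where F0: "F0 \<in> sets borel" "F0 \<subseteq> F"
    "\<And>X. X \<in> sets lebesgue \<Longrightarrow> measure lebesgue (X \<inter> F0) = measure lebesgue (X \<inter> F)"
    using lebesgue_inner_borel[of F] F by blast
  have T0_measure: "emeasure lborel T0 = ennreal (measure lebesgue T)"
    using borel_emeasure[OF T0(1,2) T] T0(3)[of UNIV] by simp
  have F0_measure: "emeasure lborel F0 = ennreal (measure lebesgue F)"
    using borel_emeasure[OF F0(1,2) F] F0(3)[of UNIV] by simp
  have F0_mass: "emeasure lborel (cube d x \<inter> F0) = ennreal (measure lebesgue (cube d x \<inter> F))" for x
    using borel_emeasure[of "cube d x \<inter> F0" "cube d x"] F0(1) F0(3)[of "cube d x"] by (simp add: sets.Int)
  have "ennreal (c * dn * measure lebesgue T) = (\<integral>\<^sup>+x. ennreal (c * dn) * indicator T0 x \<partial>lborel)"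
    using T0(1) False dn by (simp add: nn_integral_cmult_indicator T0_measure ennreal_mult)
  also have "\<dots> \<le> (\<integral>\<^sup>+x. emeasure lborel (cube d x \<inter> F0) \<partial>lborel)"
    using dense T0(2) by (intro nn_integral_mono) (auto simp: F0_mass dn_def indicator_def ennreal_leI)
  also have "\<dots> = ennreal (dn * measure lebesgue F)"
    using F0(1) d by (simp add: nn_integral_emeasure_cube_inter dn_def F0_measure ennreal_mult)
  finally have "c * dn * measure lebesgue T \<le> dn * measure lebesgue F"
    using dn by (simp add: ennreal_le_iff)
  then show ?thesis using dn by (simp add: mult.commute mult.left_commute)
qed

text \<open>If a convex set contains the unit cube, then each cube of side \<open>d\<close> with
  corner in the shrunken copy \<open>(1 - d) \<Lambda>\<close> lies in \<open>\<Lambda>\<close>: it is the image of the unit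
  cube under the homothety \<open>q \<mapsto> (1 - d) z + d q\<close>.\<close>

lemma cube_in_shrunken_convex:
  fixes \<Lambda> :: "'a::euclidean_space set"
  assumes "convex \<Lambda>" "unit_cube \<subseteq> \<Lambda>" "0 < d" "d \<le> 1" "z \<in> \<Lambda>"
  shows "cube d ((1 - d) *\<^sub>R z) \<subseteq> \<Lambda>"
proof
  fix y assume y: "y \<in> cube d ((1 - d) *\<^sub>R z)"
  define q where "q = (1 / d) *\<^sub>R (y - (1 - d) *\<^sub>R z)"
  have "0 \<le> q \<bullet> i \<and> q \<bullet> i \<le> 1" if i: "i \<in> Basis" for i
  proof -
    have "(1 - d) * (z \<bullet> i) \<le> y \<bullet> i" "y \<bullet> i \<le> (1 - d) * (z \<bullet> i) + d"
      using y i by (auto simp: cube_def mem_box inner_simps)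
    moreover have "q \<bullet> i = (y \<bullet> i - (1 - d) * (z \<bullet> i)) / d"
      by (simp add: q_def inner_simps divide_inverse mult.commute)
    ultimately show ?thesis using assms(3) by simp
  qed
  then have "q \<in> unit_cube" by (simp add: unit_cube_def mem_box)
  then have "q \<in> \<Lambda>" using assms(2) by auto
  moreover have "y = (1 - d) *\<^sub>R z + d *\<^sub>R q" using assms(3) by (simp add: q_def)
  ultimately show "y \<in> \<Lambda>" using convexD[OF assms(1) assms(5)] assms(3,4) by simp
qed

lemma connected_value_between:
  fixes f :: "'a::topological_space \<Rightarrow> real"
  assumes "connected T" "continuous_on T f" "a \<le> b"
    and "x1 \<in> T" "a \<le> f x1" and "x2 \<in> T" "f x2 \<le> b"
  shows "\<exists>x\<in>T. a \<le> f x \<and> f x \<le> b"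
proof (cases "a \<le> f x2")
  case True
  then show ?thesis using assms(6,7) by blast
next
  case False
  have "a \<in> {f x2..f x1}" using False assms(5) by simp
  also have "\<dots> \<subseteq> f ` T"
    using assms by (intro connected_contains_Icc connected_continuous_image) auto
  finally show ?thesis using assms(3) by auto
qed

lemma sparse_cube_exists:
  fixes T \<Lambda> F :: "'a::euclidean_space set"
  assumes T: "T \<in> lmeasurable" and \<Lambda>: "\<Lambda> \<in> lmeasurable" and F: "F \<in> sets lebesgue"
    and d: "d > 0" and inside: "\<And>x. x \<in> T \<Longrightarrow> cube d x \<subseteq> \<Lambda>"
    and small: "measure lebesgue (\<Lambda> \<inter> F) < c * measure lebesgue T"
  shows "\<exists>x\<in>T. measure lebesgue (cube d x \<inter> F) < c * d ^ DIM('a)"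
proof (rule ccontr)
  assume "\<not> ?thesis"
  moreover have "cube d x \<inter> (\<Lambda> \<inter> F) = cube d x \<inter> F" if "x \<in> T" for x
    using inside[OF that] by auto
  ultimately have "c * measure lebesgue T \<le> measure lebesgue (\<Lambda> \<inter> F)"
    using F d by (intro cube_density_averaging[OF T fmeasurable_Int_fmeasurable[OF \<Lambda> F]]) auto
  with small show False by simp
qed

lemma measure_shrunken_ge:
  fixes \<Lambda> :: "'a::euclidean_space set" and d :: real
  assumes "\<Lambda> \<in> lmeasurable" "0 \<le> d" "d \<le> 1"
  shows "(1 - DIM('a) * d) * measure lebesgue \<Lambda> \<le> measure lebesgue ((\<lambda>x. (1 - d) *\<^sub>R x) ` \<Lambda>)"
proof -
  have "(1 - DIM('a) * d) * measure lebesgue \<Lambda> \<le> (1 - d) ^ DIM('a) * measure lebesgue \<Lambda>"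
    using Bernoulli_inequality[of "- d" "DIM('a)"] assms by (intro mult_right_mono) simp_all
  also have "\<dots> = measure lebesgue ((\<lambda>x. (1 - d) *\<^sub>R x) ` \<Lambda>)"
    using measure_lebesgue_affine[of "1 - d" 0 \<Lambda>] assms by simp
  finally show ?thesis .
qed

lemma balanced_cube_in_family:
  fixes T \<Lambda> E :: "'a::euclidean_space set"
  assumes T: "T \<in> lmeasurable" "connected T" and \<Lambda>: "\<Lambda> \<in> lmeasurable" and E: "E \<in> sets lebesgue"
    and d: "d > 0" and inside: "\<And>x. x \<in> T \<Longrightarrow> cube d x \<subseteq> \<Lambda>"
    and \<alpha>: "0 < \<alpha>" "\<alpha> < 1" and \<epsilon>: "0 < \<epsilon>" "\<epsilon> < 1"
    and T_large: "(1 - \<epsilon>) * measure lebesgue \<Lambda> < measure lebesgue T"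
    and mass_E: "measure lebesgue (\<Lambda> \<inter> E) = \<alpha> * measure lebesgue \<Lambda>"
  shows "\<exists>p\<in>T. (\<alpha> - \<epsilon>) / (1 - \<epsilon>) * d ^ DIM('a) \<le> measure lebesgue (cube d p \<inter> E) \<and>
    measure lebesgue (cube d p \<inter> E) \<le> \<alpha> / (1 - \<epsilon>) * d ^ DIM('a)"
proof -
  define M where "M = measure lebesgue \<Lambda>"
  define dn where "dn = d ^ DIM('a)"
  define \<phi> where "\<phi> x = measure lebesgue (cube d x \<inter> E)" for x
  define lo where "lo = (\<alpha> - \<epsilon>) / (1 - \<epsilon>)"
  define hi where "hi = \<alpha> / (1 - \<epsilon>)"
  have dn: "0 < dn" using d by (simp add: dn_def)
  have "\<Lambda> \<inter> - E = \<Lambda> - \<Lambda> \<inter> E" by blast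
  moreover have "measure lebesgue (\<Lambda> - \<Lambda> \<inter> E) = M - measure lebesgue (\<Lambda> \<inter> E)"
    using \<Lambda> E fmeasurableD2[OF \<Lambda>] unfolding M_def by (intro measure_Diff) auto
  ultimately have mass_not_E: "measure lebesgue (\<Lambda> \<inter> - E) = (1 - \<alpha>) * M"
    using mass_E by (simp add: M_def algebra_simps)
  have "\<alpha> * M = hi * ((1 - \<epsilon>) * M)" using \<epsilon> by (simp add: hi_def)
  also have "\<dots> < hi * measure lebesgue T"
    using T_large \<alpha> \<epsilon> unfolding M_def by (intro mult_strict_left_mono) (simp_all add: hi_def)
  finally have "\<exists>x\<in>T. \<phi> x < hi * dn"
    using sparse_cube_exists[OF T(1) \<Lambda> E d inside, of hi] mass_E
    unfolding \<phi>_def dn_def M_def by simp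
  then obtain x2 where x2: "x2 \<in> T" "\<phi> x2 < hi * dn" by blast
  have "(1 - \<alpha>) * M = (1 - lo) * ((1 - \<epsilon>) * M)" using \<epsilon> by (simp add: lo_def field_simps)
  also have "\<dots> < (1 - lo) * measure lebesgue T"
    using T_large \<alpha> \<epsilon> unfolding M_def
    by (intro mult_strict_left_mono) (simp_all add: lo_def field_simps)
  finally have "(1 - \<alpha>) * M < (1 - lo) * measure lebesgue T" .
  moreover have "- E \<in> sets lebesgue"
    using sets.compl_sets[OF E] by (simp add: Compl_eq_Diff_UNIV)
  ultimately have "\<exists>x\<in>T. measure lebesgue (cube d x \<inter> - E) < (1 - lo) * dn"
    using sparse_cube_exists[OF T(1) \<Lambda> _ d inside] mass_not_E
    unfolding dn_def by simp
  then obtain x1 where x1: "x1 \<in> T" "measure lebesgue (cube d x1 \<inter> - E) < (1 - lo) * dn"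
    by blast
  have "cube d x1 \<inter> - E = cube d x1 - cube d x1 \<inter> E" by blast
  moreover have "measure lebesgue (cube d x1 - cube d x1 \<inter> E)
      = measure lebesgue (cube d x1) - measure lebesgue (cube d x1 \<inter> E)"
    using E fmeasurableD2[OF cube_lmeasurable] by (intro measure_Diff) auto
  ultimately have "measure lebesgue (cube d x1 \<inter> - E) = dn - \<phi> x1"
    using measure_cube[of d x1] d by (simp add: \<phi>_def dn_def)
  with x1(2) have lower: "lo * dn \<le> \<phi> x1" by (simp add: algebra_simps)
  have \<phi>_continuous: "continuous_on T \<phi>"
    unfolding \<phi>_def using continuous_measure_cube_inter[OF _ E, of d] d
    by (auto intro: continuous_on_subset)
  have "lo * dn \<le> hi * dn" using \<epsilon> dn by (simp add: lo_def hi_def divide_right_mono)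
  from connected_value_between[OF T(2) \<phi>_continuous this x1(1) lower x2(1) less_imp_le[OF x2(2)]]
  show ?thesis unfolding \<phi>_def lo_def hi_def dn_def .
qed

lemma balanced_cube_exists:
  fixes \<Lambda> E :: "'a::euclidean_space set"
  assumes \<alpha>: "0 < \<alpha>" "\<alpha> < 1" and \<epsilon>: "0 < \<epsilon>" "\<epsilon> < min \<alpha> (1 - \<alpha>)"
    and \<Lambda>: "convex \<Lambda>" "bounded \<Lambda>" "unit_cube \<subseteq> \<Lambda>"
    and E: "E \<in> sets lebesgue" "measure lebesgue (\<Lambda> \<inter> E) / measure lebesgue \<Lambda> = \<alpha>"
  shows "\<exists>R. axis_cube R \<and> R \<subseteq> \<Lambda> \<and> measure lebesgue R = (\<epsilon> / (2 * DIM('a))) ^ DIM('a) \<and>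
    (\<alpha> - \<epsilon>) / (1 - \<epsilon>) \<le> measure lebesgue (R \<inter> E) / measure lebesgue R \<and>
    measure lebesgue (R \<inter> E) / measure lebesgue R \<le> \<alpha> / (1 - \<epsilon>)"
proof -
  define d where "d = \<epsilon> / (2 * DIM('a))"
  define M where "M = measure lebesgue \<Lambda>"
  define T where "T = (\<lambda>x. (1 - d) *\<^sub>R x) ` \<Lambda>"
  have "1 \<le> real DIM('a)" using DIM_positive[where 'a='a] by linarith
  then have "d \<le> \<epsilon> / 2"
    unfolding d_def using \<epsilon> by (intro divide_left_mono) auto
  moreover have "0 < d" "DIM('a) * d = \<epsilon> / 2" using \<epsilon> by (simp_all add: d_def)
  ultimately have d: "0 < d" "d < 1" "DIM('a) * d = \<epsilon> / 2" using \<epsilon> by auto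
  have \<Lambda>_lmeasurable: "\<Lambda> \<in> lmeasurable" using \<Lambda> by (intro measurable_convex)
  have "measure lebesgue (unit_cube :: 'a set) = 1"
    by (simp add: unit_cube_def measure_lborel_cbox_eq)
  then have M: "1 \<le> M"
    unfolding M_def using \<Lambda>(3) \<Lambda>_lmeasurable
    by (metis measure_mono_fmeasurable unit_cube_def fmeasurableD lmeasurable_cbox)
  have "(1 - \<epsilon>) * M < (1 - DIM('a) * d) * M" using M \<epsilon> d(3) by simp
  also have "\<dots> \<le> measure lebesgue T"
    unfolding T_def M_def using \<Lambda>_lmeasurable d by (intro measure_shrunken_ge) auto
  finally have T_large: "(1 - \<epsilon>) * M < measure lebesgue T" .
  have inside: "cube d x \<subseteq> \<Lambda>" if "x \<in> T" for x
    using that cube_in_shrunken_convex[OF \<Lambda>(1,3) d(1)] d(2) by (auto simp: T_def)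
  have "T \<in> lmeasurable" "connected T"
    unfolding T_def using \<Lambda>
    by (auto intro: measurable_convex convex_scaling bounded_scaling convex_connected)
  moreover have "measure lebesgue (\<Lambda> \<inter> E) = \<alpha> * M"
    using E(2) M by (simp add: M_def field_simps)
  ultimately obtain p where p: "p \<in> T"
    "(\<alpha> - \<epsilon>) / (1 - \<epsilon>) * d ^ DIM('a) \<le> measure lebesgue (cube d p \<inter> E)"
    "measure lebesgue (cube d p \<inter> E) \<le> \<alpha> / (1 - \<epsilon>) * d ^ DIM('a)"
    using balanced_cube_in_family[OF _ _ \<Lambda>_lmeasurable E(1) d(1) inside \<alpha>, of T \<epsilon>] \<epsilon> T_large
    unfolding M_def by auto
  have R_measure: "measure lebesgue (cube d p) = d ^ DIM('a)" using measure_cube[of d p] d by simp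
  show ?thesis
  proof (intro exI conjI)
    show "axis_cube (cube d p)" unfolding axis_cube_def cube_def using d by blast
    show "cube d p \<subseteq> \<Lambda>" using inside[OF p(1)] .
    show "measure lebesgue (cube d p) = (\<epsilon> / (2 * DIM('a))) ^ DIM('a)"
      using R_measure by (simp add: d_def)
    show "(\<alpha> - \<epsilon>) / (1 - \<epsilon>) \<le> measure lebesgue (cube d p \<inter> E) / measure lebesgue (cube d p)"
      using p(2) d unfolding R_measure by (simp add: pos_le_divide_eq)
    show "measure lebesgue (cube d p \<inter> E) / measure lebesgue (cube d p) \<le> \<alpha> / (1 - \<epsilon>)"
      using p(3) d unfolding R_measure by (simp add: pos_divide_le_eq)
  qed
qed

lemma bounded_dilate_unit_cube: "bounded (dilate c x0 (unit_cube :: 'a::euclidean_space set))"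
  unfolding dilate_def unit_cube_def
  by (intro compact_imp_bounded compact_continuous_image continuous_intros) auto

theorem lemma3:
  "\<exists>a A::real. 0 < a \<and> a \<le> A \<and>
    (\<forall>(\<alpha>::real) (\<epsilon>::real) (\<Lambda>::'a::euclidean_space set) (E::'a set).
       0 < \<alpha> \<and> \<alpha> < 1 \<and> 0 < \<epsilon> \<and> \<epsilon> < min \<alpha> (1 - \<alpha>) \<and>
       convex \<Lambda> \<and> unit_cube \<subseteq> \<Lambda> \<and>
       \<Lambda> \<subseteq> dilate (real DIM('a) powr (3/2)) unit_cube_center unit_cube \<and>
       E \<in> sets lebesgue \<and> emeasure lebesgue E < \<infinity> \<and>
       measure lebesgue (\<Lambda> \<inter> E) / measure lebesgue \<Lambda> = \<alpha>
     \<longrightarrow> (\<exists>R. axis_cube R \<and> R \<subseteq> \<Lambda> \<and>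
            a * \<epsilon> ^ DIM('a) \<le> measure lebesgue R \<and>
            measure lebesgue R \<le> A * \<epsilon> ^ DIM('a) \<and>
            (\<alpha> - \<epsilon>) / (1 - \<epsilon>) \<le> measure lebesgue (R \<inter> E) / measure lebesgue R \<and>
            measure lebesgue (R \<inter> E) / measure lebesgue R \<le> \<alpha> / (1 - \<epsilon>)))"
  apply (intro exI[of _ "1 / (2 * real DIM('a)) ^ DIM('a)"] conjI allI impI)
    apply simp
   apply simp
  apply (elim conjE)
  subgoal premises H for \<alpha> \<epsilon> \<Lambda> E
  proof -
    have "bounded \<Lambda>" using H(7) bounded_dilate_unit_cube bounded_subset by blast
    then obtain R where "axis_cube R" "R \<subseteq> \<Lambda>"
      and "measure lebesgue R = (\<epsilon> / (2 * DIM('a))) ^ DIM('a)"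
      and "(\<alpha> - \<epsilon>) / (1 - \<epsilon>) \<le> measure lebesgue (R \<inter> E) / measure lebesgue R"
      and "measure lebesgue (R \<inter> E) / measure lebesgue R \<le> \<alpha> / (1 - \<epsilon>)"
      using balanced_cube_exists[OF H(1-5) _ H(6,8,10)] by blast
    then show ?thesis by (auto simp: power_divide)
  qed
  done

end
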